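(* Let $T$ be a rooted tree with root $r$ in which every node $u$ carries a positive integer $w(u)$ such that $w(u)\ge\sum_{v\in C(u)} w(v)$ for every node $u$, where $C(u)$ is the set of children of $u$. For an internal node $u$ with at least two children, let $\mathrm{SecW}(u)$ denote the second largest value in the multiset $\{w(v): v\in C(u)\}$, and let $\mathrm{SecW}(u)=0$ if $u$ has fewer than two children. Let $x>0$ and let $A$ be the set of nodes $u$ of $T$ with $\mathrm{SecW}(u)>x$. Then $|A| < w(r)/x$. *)

theory Defs
  imports Complex_Main "HOL-Library.Multiset"
begin

text \<open>The edges are v -- parent v for v \<noteq> r.\<close>
definition rooted_tree :: "'a set \<Rightarrow> 'a \<Rightarrow> ('a \<Rightarrow> 'a) \<Rightarrow> bool" where
  "rooted_tree V r par \<longleftrightarrow> finite V \<and> r \<in> V \<and>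
     (\<forall>v \<in> V - {r}. par v \<in> V) \<and>
     (\<forall>v \<in> V. \<exists>n. (par ^^ n) v = r)"

definition children :: "'a set \<Rightarrow> 'a \<Rightarrow> ('a \<Rightarrow> 'a) \<Rightarrow> 'a \<Rightarrow> 'a set" where
  "children V r par u = {v \<in> V. v \<noteq> r \<and> par v = u}"

definition second_largest :: "nat multiset \<Rightarrow> nat" where
  "second_largest M = (if size M \<ge> 2 then sorted_list_of_multiset M ! (size M - 2) else 0)"

definition SecW :: "'a set \<Rightarrow> 'a \<Rightarrow> ('a \<Rightarrow> 'a) \<Rightarrow> ('a \<Rightarrow> nat) \<Rightarrow> 'a \<Rightarrow> nat" where
  "SecW V r par w u = second_largest (image_mset w (mset_set (children V r par u)))"

end

theory Submission
  imports Defs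
begin

(* Let f(u) count the nodes of A in the subtree of u. By induction from the leaves,
   x (f(u) + 1) < w(u) whenever f(u) > 0. Every child c of u has x f(c) <= w(c), and it has the
   surplus x (f(c) + 1) < w(c) if f(c) > 0 (by induction) or if w(c) > x. A node of A has at
   least two children of weight at least SecW(u) > x, and a node outside A with f(u) > 0 has a
   child with f(c) > 0; either way the surpluses pay for the node's own share of f(u) + 1, and
   w(u) dominates the total weight of the children. At the root, f(r) = |A|. *)

lemma size_filter_ge_second_largest:
  assumes "2 \<le> size M"
  shows "2 \<le> size (filter_mset (\<lambda>y. second_largest M \<le> y) M)"
proof -
  define L where "L = sorted_list_of_multiset M"
  define n where "n = size M"
  have len: "length L = n"
    unfolding L_def n_def by (metis mset_sorted_list_of_multiset size_mset)
  have srt: "sorted L"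
    unfolding L_def by simp
  have snd: "second_largest M = L ! (n - 2)"
    using assms unfolding second_largest_def L_def n_def by simp
  have "size (filter_mset (\<lambda>y. second_largest M \<le> y) M)
          = length (filter (\<lambda>y. second_largest M \<le> y) L)"
    by (metis L_def mset_filter mset_sorted_list_of_multiset size_mset)
  also have "\<dots> = card {i. i < n \<and> second_largest M \<le> L ! i}"
    by (simp add: length_filter_conv_card len)
  finally have eq: "size (filter_mset (\<lambda>y. second_largest M \<le> y) M)
          = card {i. i < n \<and> second_largest M \<le> L ! i}" .
  have "{n - 2, n - 1} \<subseteq> {i. i < n \<and> second_largest M \<le> L ! i}"
    using assms srt len snd unfolding n_def by (auto intro: sorted_nth_mono)
  from card_mono[OF _ this] have "card {n - 2, n - 1} \<le> card {i. i < n \<and> second_largest M \<le> L ! i}"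
    by simp
  moreover have "card {n - 2, n - 1} = 2"
    using assms unfolding n_def by simp
  ultimately show ?thesis
    using eq by simp
qed

lemma two_le_card_ge_second_largest:
  assumes "finite C" and "0 < second_largest (image_mset w (mset_set C))"
  shows "2 \<le> card {c \<in> C. second_largest (image_mset w (mset_set C)) \<le> w c}"
proof -
  let ?M = "image_mset w (mset_set C)"
  have "2 \<le> size ?M"
    using assms(2) unfolding second_largest_def by (auto split: if_splits)
  then have "2 \<le> size (filter_mset (\<lambda>y. second_largest ?M \<le> y) ?M)"
    by (rule size_filter_ge_second_largest)
  then show ?thesis
    using assms(1) by (simp add: filter_mset_image_mset)
qed

lemma sum_bound_with_surplus:
  fixes f :: "'a \<Rightarrow> nat" and x :: real and w :: "'a \<Rightarrow> real"
  assumes "finite C" "B \<subseteq> C" "B \<noteq> {}"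
    and "\<And>c. c \<in> C \<Longrightarrow> x * f c \<le> w c"
    and "\<And>c. c \<in> B \<Longrightarrow> x * (f c + 1) < w c"
  shows "x * ((\<Sum>c\<in>C. f c) + card B) < (\<Sum>c\<in>C. w c)"
proof -
  have finB: "finite B"
    using assms(1,2) finite_subset by blast
  have "(\<Sum>c\<in>C. f c) = (\<Sum>c\<in>B. f c) + (\<Sum>c\<in>C - B. f c)"
    using sum.subset_diff[OF assms(2,1), of f] by (simp add: add.commute)
  then have "x * ((\<Sum>c\<in>C. f c) + card B) = (\<Sum>c\<in>B. x * (f c + 1)) + (\<Sum>c\<in>C - B. x * f c)"
    by (simp add: sum.distrib sum_distrib_left algebra_simps)
  also have "\<dots> < (\<Sum>c\<in>B. w c) + (\<Sum>c\<in>C - B. w c)"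
  proof (rule add_less_le_mono)
    show "(\<Sum>c\<in>B. x * (f c + 1)) < (\<Sum>c\<in>B. w c)"
      using finB assms(3,5) by (rule sum_strict_mono)
    show "(\<Sum>c\<in>C - B. x * f c) \<le> (\<Sum>c\<in>C - B. w c)"
      using assms(4) by (intro sum_mono) blast
  qed
  also have "\<dots> = (\<Sum>c\<in>C. w c)"
    using sum.subset_diff[OF assms(2,1), of w] by simp
  finally show ?thesis .
qed

lemma sum_bound_heavy_branching:
  fixes f w :: "'a \<Rightarrow> nat" and x :: real
  assumes "finite C" "0 \<le> x" and heavy: "x < second_largest (image_mset w (mset_set C))"
    and le: "\<And>c. c \<in> C \<Longrightarrow> x * f c \<le> w c"
    and surplus: "\<And>c. c \<in> C \<Longrightarrow> 0 < f c \<Longrightarrow> x * (f c + 1) < w c"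
  shows "x * ((\<Sum>c\<in>C. f c) + 2) < (\<Sum>c\<in>C. real (w c))"
proof -
  define s where "s = second_largest (image_mset w (mset_set C))"
  define B where "B = {c \<in> C. s \<le> w c}"
  have "0 < s"
    using assms(2) heavy unfolding s_def by simp
  then have "2 \<le> card B"
    unfolding B_def s_def by (rule two_le_card_ge_second_largest[OF assms(1)])
  have "x * (f c + 1) < w c" if "c \<in> B" for c
  proof (cases "f c = 0")
    case True
    then show ?thesis
      using that heavy unfolding B_def s_def by simp
  next
    case False
    then show ?thesis
      using that surplus unfolding B_def by simp
  qed
  moreover have "B \<noteq> {}"
    using \<open>2 \<le> card B\<close> by auto
  ultimately have "x * ((\<Sum>c\<in>C. f c) + card B) < (\<Sum>c\<in>C. real (w c))"
    using le by (intro sum_bound_with_surplus[OF assms(1)]) (auto simp: B_def)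
  moreover have "x * ((\<Sum>c\<in>C. f c) + 2) \<le> x * ((\<Sum>c\<in>C. f c) + card B)"
    using \<open>2 \<le> card B\<close> assms(2) by (simp add: mult_left_mono)
  ultimately show ?thesis
    by linarith
qed

locale parent_tree =
  fixes V :: "'a set" and r :: 'a and par :: "'a \<Rightarrow> 'a"
  assumes rooted: "rooted_tree V r par"
begin

abbreviation ch :: "'a \<Rightarrow> 'a set" where
  "ch \<equiv> children V r par"

lemma finite_V: "finite V"
  and root_in_V: "r \<in> V"
  and parent_in_V: "v \<in> V \<Longrightarrow> v \<noteq> r \<Longrightarrow> par v \<in> V"
  and reaches_root: "v \<in> V \<Longrightarrow> \<exists>n. (par ^^ n) v = r"
  using rooted unfolding rooted_tree_def by auto

definition depth :: "'a \<Rightarrow> nat" where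
  "depth v = (LEAST n. (par ^^ n) v = r)"

lemma depth_root: "depth r = 0"
  unfolding depth_def by simp

lemma funpow_depth: "v \<in> V \<Longrightarrow> (par ^^ depth v) v = r"
  unfolding depth_def using reaches_root by (rule LeastI_ex)

lemma depth_parent:
  assumes "v \<in> V" "v \<noteq> r"
  shows "depth v = Suc (depth (par v))"
proof -
  have "depth v \<noteq> 0"
    using funpow_depth[OF assms(1)] assms(2) by (metis funpow_0)
  then obtain m where m: "depth v = Suc m"
    using not0_implies_Suc by blast
  then have "(par ^^ m) (par v) = r"
    using funpow_depth[OF assms(1)] by (simp add: funpow_Suc_right del: funpow.simps)
  then have "depth (par v) \<le> m"
    unfolding depth_def by (rule Least_le)
  moreover have "(par ^^ Suc (depth (par v))) v = r"
    using funpow_depth[OF parent_in_V[OF assms]] by (simp add: funpow_Suc_right del: funpow.simps)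
  then have "depth v \<le> Suc (depth (par v))"
    unfolding depth_def by (rule Least_le)
  ultimately show ?thesis
    using m by simp
qed

lemma ancestor_depth:
  "v \<in> V \<Longrightarrow> k \<le> depth v \<Longrightarrow> (par ^^ k) v \<in> V \<and> depth ((par ^^ k) v) = depth v - k"
proof (induction k)
  case (Suc k)
  then have IH: "(par ^^ k) v \<in> V" "depth ((par ^^ k) v) = depth v - k" by auto
  moreover have "(par ^^ k) v \<noteq> r"
    using IH Suc.prems depth_root by auto
  ultimately have "par ((par ^^ k) v) \<in> V" "depth ((par ^^ k) v) = Suc (depth (par ((par ^^ k) v)))"
    using parent_in_V depth_parent by blast+
  then show ?case
    using IH(2) by simp
qed simp

lemma mem_children_iff: "c \<in> ch u \<longleftrightarrow> c \<in> V \<and> c \<noteq> r \<and> par c = u"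
  unfolding children_def by simp

lemma depth_child: "c \<in> ch u \<Longrightarrow> depth c = Suc (depth u)"
  using depth_parent mem_children_iff by auto

lemma finite_children: "finite (ch u)"
  unfolding children_def using finite_V by simp

lemma tree_induct [consumes 1, case_names step]:
  assumes "u \<in> V"
    and step: "\<And>u. u \<in> V \<Longrightarrow> (\<And>c. c \<in> ch u \<Longrightarrow> P c) \<Longrightarrow> P u"
  shows "P u"
  using assms(1)
proof (induction "Max (depth ` V) - depth u" arbitrary: u rule: less_induct)
  case less
  have "Max (depth ` V) - depth c < Max (depth ` V) - depth u" if "c \<in> ch u" for c
  proof -
    have "depth c \<le> Max (depth ` V)"
      using that finite_V mem_children_iff by simp
    then show ?thesis
      using depth_child[OF that] by simp
  qed
  with less show ?case
    using step mem_children_iff by blast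
qed

definition descendants :: "'a \<Rightarrow> 'a set" where
  "descendants u = {v \<in> V. \<exists>k \<le> depth v. (par ^^ k) v = u}"

lemma descendants_root: "descendants r = V"
  unfolding descendants_def using funpow_depth by auto

lemma descendants_children:
  assumes "u \<in> V"
  shows "descendants u = insert u (\<Union>c\<in>ch u. descendants c)"
proof (intro equalityI subsetI)
  fix v assume "v \<in> descendants u"
  then obtain k where v: "v \<in> V" "k \<le> depth v" "(par ^^ k) v = u"
    unfolding descendants_def by blast
  show "v \<in> insert u (\<Union>c\<in>ch u. descendants c)"
  proof (cases k)
    case (Suc j)
    define c where "c = (par ^^ j) v"
    have "c \<in> V" "depth c = depth v - j"
      using ancestor_depth[of v j] v Suc unfolding c_def by auto
    moreover have "c \<noteq> r"
      using \<open>depth c = depth v - j\<close> v(2) Suc depth_root by auto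
    moreover have "par c = u"
      using v(3) Suc unfolding c_def by simp
    ultimately have "c \<in> ch u"
      by (simp add: mem_children_iff)
    moreover have "v \<in> descendants c"
      using v Suc Suc_leD unfolding descendants_def c_def by blast
    ultimately show ?thesis by blast
  qed (use v in simp)
next
  fix v assume "v \<in> insert u (\<Union>c\<in>ch u. descendants c)"
  then consider "v = u" | c where "c \<in> ch u" "v \<in> descendants c" by blast
  then show "v \<in> descendants u"
  proof cases
    case 1
    have "(par ^^ 0) u = u"
      by simp
    with 1 assms show ?thesis
      unfolding descendants_def by blast
  next
    case 2
    then obtain k where v: "v \<in> V" "k \<le> depth v" "(par ^^ k) v = c"
      unfolding descendants_def by blast
    have "depth c = depth v - k"
      using ancestor_depth[OF v(1,2)] v(3) by simp
    moreover have "depth c = Suc (depth u)"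
      using 2(1) depth_child by simp
    ultimately have "Suc k \<le> depth v"
      by linarith
    moreover have "(par ^^ Suc k) v = u"
      using 2(1) v(3) mem_children_iff by auto
    ultimately show ?thesis
      using v(1) unfolding descendants_def by blast
  qed
qed

lemma descendants_children_disjoint:
  assumes "c \<in> ch u" "c' \<in> ch u" "c \<noteq> c'"
  shows "descendants c \<inter> descendants c' = {}"
proof -
  have "c = c'" if "(par ^^ k) v = c" "(par ^^ k') v = c'" "v \<in> V" "k \<le> depth v" "k' \<le> depth v"
    for v k k'
  proof -
    have "depth v - k = depth c" "depth v - k' = depth c'"
      using that ancestor_depth by auto
    then have "depth v - k = depth v - k'"
      using assms(1,2) depth_child by simp
    then have "k = k'"
      using that(4,5) by simp
    then show ?thesis
      using that(1,2) by simp
  qed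
  with assms(3) show ?thesis
    unfolding descendants_def by blast
qed

lemma not_mem_descendants_child:
  assumes "c \<in> ch u"
  shows "u \<notin> descendants c"
proof
  assume "u \<in> descendants c"
  then obtain k where "u \<in> V" "k \<le> depth u" "(par ^^ k) u = c"
    unfolding descendants_def by blast
  then have "depth c \<le> depth u"
    using ancestor_depth by auto
  with assms show False
    using depth_child by simp
qed

lemma card_Int_descendants:
  assumes "u \<in> V"
  shows "card (A \<inter> descendants u) = of_bool (u \<in> A) + (\<Sum>c\<in>ch u. card (A \<inter> descendants c))"
proof -
  have fin: "finite (A \<inter> descendants c)" for c
    using finite_V unfolding descendants_def by simp
  have split: "A \<inter> descendants u = (A \<inter> {u}) \<union> (\<Union>c\<in>ch u. A \<inter> descendants c)"
    using descendants_children[OF assms] by auto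
  have "card (A \<inter> descendants u)
      = card (A \<inter> {u}) + card (\<Union>c\<in>ch u. A \<inter> descendants c)"
    unfolding split
  proof (rule card_Un_disjoint)
    show "finite (\<Union>c\<in>ch u. A \<inter> descendants c)"
      using fin finite_children by blast
    show "A \<inter> {u} \<inter> (\<Union>c\<in>ch u. A \<inter> descendants c) = {}"
      using not_mem_descendants_child by blast
  qed simp
  also have "card (\<Union>c\<in>ch u. A \<inter> descendants c) = (\<Sum>c\<in>ch u. card (A \<inter> descendants c))"
    using finite_children fin descendants_children_disjoint
    by (intro card_UN_disjoint) blast+
  also have "card (A \<inter> {u}) = of_bool (u \<in> A)"
    by auto
  finally show ?thesis .
qed

lemma heavy_descendants_bound:
  assumes superadditive: "\<And>u. u \<in> V \<Longrightarrow> (\<Sum>c\<in>ch u. w c) \<le> w u"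
    and heavy: "\<And>u. u \<in> A \<Longrightarrow> x < real (SecW V r par w u)"
    and "0 \<le> x" and "u \<in> V" and "0 < card (A \<inter> descendants u)"
  shows "x * (card (A \<inter> descendants u) + 1) < w u"
  using assms(4,5)
proof (induction u rule: tree_induct)
  case (step u)
  define f where "f c = card (A \<inter> descendants c)" for c
  have surplus: "x * (f c + 1) < w c" if "c \<in> ch u" "0 < f c" for c
    using step.IH that unfolding f_def by blast
  have le: "x * f c \<le> w c" if "c \<in> ch u" for c
  proof (cases "f c = 0")
    case False
    then have "x * f c < w c"
      using surplus[OF that] \<open>0 \<le> x\<close> by (simp add: algebra_simps)
    then show ?thesis by simp
  qed simp
  have f_u: "f u = of_bool (u \<in> A) + (\<Sum>c\<in>ch u. f c)"
    unfolding f_def using card_Int_descendants[OF step.hyps] .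
  have "x * (f u + 1) < (\<Sum>c\<in>ch u. real (w c))"
  proof (cases "u \<in> A")
    case True
    then have "x < second_largest (image_mset w (mset_set (ch u)))"
      using heavy unfolding SecW_def by blast
    then have "x * ((\<Sum>c\<in>ch u. f c) + 2) < (\<Sum>c\<in>ch u. real (w c))"
      using finite_children \<open>0 \<le> x\<close> le surplus by (intro sum_bound_heavy_branching) auto
    then show ?thesis
      using f_u True by simp
  next
    case False
    then have "0 < (\<Sum>c\<in>ch u. f c)"
      using f_u step.prems unfolding f_def by simp
    then have "\<exists>c\<in>ch u. 0 < f c"
      using finite_children by (metis not_gr0 sum_eq_0_iff)
    then obtain c where "c \<in> ch u" "0 < f c"
      by blast
    then have "x * ((\<Sum>c\<in>ch u. f c) + card {c}) < (\<Sum>c\<in>ch u. real (w c))"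
      using le surplus by (intro sum_bound_with_surplus[OF finite_children]) auto
    then show ?thesis
      using f_u False by simp
  qed
  also have "\<dots> \<le> w u"
    using superadditive[OF step.hyps] by (metis of_nat_le_iff of_nat_sum)
  finally show ?case
    unfolding f_def .
qed

end

theorem lemma3:
  fixes V :: "'a set" and r :: 'a and par :: "'a \<Rightarrow> 'a"
    and w :: "'a \<Rightarrow> nat" and x :: real
  assumes "rooted_tree V r par"
    and "\<And>u. u \<in> V \<Longrightarrow> w u > 0"
    and "\<And>u. u \<in> V \<Longrightarrow> w u \<ge> (\<Sum>v\<in>children V r par u. w v)"
    and "x > 0"
  shows "real (card {u \<in> V. real (SecW V r par w u) > x}) < real (w r) / x"
proof -
  interpret parent_tree V r par
    using assms(1) by unfold_locales
  define A where "A = {u \<in> V. real (SecW V r par w u) > x}"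
  have "A \<inter> descendants r = A"
    unfolding descendants_root A_def by auto
  have "x * card A < w r"
  proof (cases "card A = 0")
    case False
    then have "x * (card A + 1) < w r"
      using heavy_descendants_bound[of w A x r] assms(3,4) root_in_V \<open>A \<inter> descendants r = A\<close>
      unfolding A_def by auto
    then show ?thesis
      using assms(4) by (simp add: algebra_simps)
  qed (use assms(2) root_in_V in simp)
  then show ?thesis
    unfolding A_def using assms(4) by (simp add: pos_less_divide_eq mult.commute)
qed

end
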